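(* Let $X_1,X_2,\dots$ be independent integer-valued random variables with common distribution function $F(x)=P(X_1\le x)$, where $F$ is not concentrated on a half-axis, and let $S_0=0$, $S_n=X_1+\cdots+X_n$. Suppose $\mathbb E[X_1]<0$ and that for some $0<\xi<1$ and $0<r<1$, \[ P(X_1\le x)=\xi\, r^{-x},\qquad x=0,-1,-2,\dots. \] Let \[ \zeta=\sum_{n=1}^\infty P\Big(\max_{1\le k<n}S_k<0,\ S_n=0\Big), \] and define \[ \mathcal M(s)=\mathbb E\Big[s^{\sup_{n\ge0}S_n}\Big],\qquad \mathcal F^+(s)=\mathbb E\big[s^{X_1};\,X_1>0\big]. \] Then for $0\le s<1$, \[ \mathcal M(s)=\frac{1-\zeta-r-(1-r)\mathbb E[X_1]}{1-\zeta-\Big[\Big(1-\frac{1-r}{1-s}\Big)\mathcal F^+(s)+s\,\frac{1-r}{1-s}\,\big(1-F(0)\big)\Big]}. \]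
   Context: For $n=1$ the condition $\max_{1\le k<n}S_k<0$ is vacuous; $\zeta$ is the probability that the first $n\ge1$ with $S_n\ge 0$ exists and has $S_n=0$. $\mathbb E[s^{X_1};X_1>0]$ denotes $\sum_{x\ge1}s^xP(X_1=x)$. *)

theory Defs
  imports "HOL-Probability.Probability"
begin

text \<open>Partial sums of the random walk: the steps are indexed from 0,
  so the paper's X_1, X_2, ... are X 0, X 1, ...; S_n = X_1 + ... + X_n.\<close>
definition rw_S :: "(nat \<Rightarrow> 'a \<Rightarrow> int) \<Rightarrow> nat \<Rightarrow> 'a \<Rightarrow> int" where
  "rw_S X n \<omega> = (\<Sum>i<n. X i \<omega>)"

end

theory Submission
  imports Defs
begin

text \<open>With a geometric left tail the walk enters (-\<infinity>, 0] without memory: from any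
  positive height it lands exactly at 0 with conditional probability 1 - r.  Reversing time
  turns the events defining \<zeta> into first entrances into (-\<infinity>, 0], so \<zeta> = 1 - r as soon
  as the walk is bounded above almost surely.

  For the maximum M n of S 0, ..., S n, Lindley's recursion M (n + 1) = max 0 (X + M n) (in law,
  with X independent of M n) and the explicit law of X on (-\<infinity>, 0] express E s^M (n + 1)
  linearly through E s^M n and E r^M n.  In the limit, G s = E s^(sup S) satisfies
  G s * D s = - \<xi> r G r for an explicit D.  Letting s \<rightarrow> 1, and using that E M n increases,
  gives \<xi> r G r = - (1 - r) E X and shows that sup S is finite almost surely; solving for G s
  yields the formula.\<close>

lemma measurable_int_sum[measurable (raw)]:
  fixes f :: "'i \<Rightarrow> 'a \<Rightarrow> int"
  assumes "\<And>i. i \<in> I \<Longrightarrow> f i \<in> M \<rightarrow>\<^sub>M count_space UNIV"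
  shows "(\<lambda>x. \<Sum>i\<in>I. f i x) \<in> M \<rightarrow>\<^sub>M count_space UNIV"
  using assms by (induction I rule: infinite_finite_induct) simp_all

lemma measurable_countable_singletons:
  assumes "countable (space K)" "\<And>x. x \<in> space K \<Longrightarrow> {x} \<in> sets K"
    and "f \<in> space K \<rightarrow> space N"
  shows "f \<in> K \<rightarrow>\<^sub>M N"
proof (rule measurableI)
  show "\<And>x. x \<in> space K \<Longrightarrow> f x \<in> space N" using assms(3) by auto
  fix A assume "A \<in> sets N"
  show "f -` A \<inter> space K \<in> sets K"
    by (rule sets.countable) (use assms(1,2) countable_subset in auto)
qed

lemma borel_measurable_count_space_comp:
  assumes "h \<in> K \<rightarrow>\<^sub>M count_space UNIV"
  shows "(\<lambda>x. (f (h x) :: real)) \<in> borel_measurable K"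
  using measurable_compose[OF assms, of f borel] by (simp add: measurable_count_space_eq1)

abbreviation int_vectors :: "nat set \<Rightarrow> (nat \<Rightarrow> int) measure" where
  "int_vectors I \<equiv> PiM I (\<lambda>_. count_space UNIV)"

lemma countable_space_int_vectors: "finite I \<Longrightarrow> countable (space (int_vectors I))"
  by (simp add: space_PiM countable_PiE)

lemma singleton_sets_int_vectors:
  assumes "finite I" "v \<in> space (int_vectors I)"
  shows "{v} \<in> sets (int_vectors I)"
proof -
  have "{v} = PiE I (\<lambda>i. {v i})" using assms(2)
    by (simp add: space_PiM PiE_iff PiE_singleton)
  also have "\<dots> \<in> sets (int_vectors I)" using assms(1) by (intro sets_PiM_I_finite) auto
  finally show ?thesis .
qed

lemma measurable_int_vectors:
  "finite I \<Longrightarrow> f \<in> space (int_vectors I) \<rightarrow> space N \<Longrightarrow> f \<in> int_vectors I \<rightarrow>\<^sub>M N"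
  by (rule measurable_countable_singletons)
    (auto simp: countable_space_int_vectors singleton_sets_int_vectors)

lemma borel_measurable_int_vectors[measurable]:
  "finite I \<Longrightarrow> (f :: _ \<Rightarrow> real) \<in> borel_measurable (int_vectors I)"
  by (rule measurable_int_vectors) auto

lemma sets_int_vectors_Collect: "finite I \<Longrightarrow> {v \<in> space (int_vectors I). P v} \<in> sets (int_vectors I)"
  by (rule sets.countable)
    (auto simp: singleton_sets_int_vectors intro: countable_subset[OF _ countable_space_int_vectors])

lemma borel_measurable_int_vectors_pair[measurable]:
  assumes "finite I" "finite J"
  shows "(f :: _ \<Rightarrow> real) \<in> borel_measurable (int_vectors I \<Otimes>\<^sub>M int_vectors J)"
proof (rule measurable_countable_singletons)
  show "countable (space (int_vectors I \<Otimes>\<^sub>M int_vectors J))"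
    using assms by (simp add: space_pair_measure countable_space_int_vectors)
  fix x assume x: "x \<in> space (int_vectors I \<Otimes>\<^sub>M int_vectors J)"
  then have "{x} = {fst x} \<times> {snd x}" by auto
  also have "\<dots> \<in> sets (int_vectors I \<Otimes>\<^sub>M int_vectors J)"
    using x assms by (intro pair_measureI singleton_sets_int_vectors) (auto simp: space_pair_measure)
  finally show "{x} \<in> sets (int_vectors I \<Otimes>\<^sub>M int_vectors J)" .
qed auto

lemma (in prob_space) prob_eq_integral_if:
  assumes "{\<omega> \<in> space M. Q \<omega>} \<in> sets M"
  shows "prob {\<omega> \<in> space M. Q \<omega>} = (\<integral>\<omega>. (if Q \<omega> then 1 else 0 :: real) \<partial>M)"
proof -
  have "(\<integral>\<omega>. (if Q \<omega> then 1 else 0 :: real) \<partial>M) = (\<integral>\<omega>. indicator {\<omega> \<in> space M. Q \<omega>} \<omega> \<partial>M)"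
    by (rule Bochner_Integration.integral_cong) auto
  then show ?thesis using assms by (simp add: Int_absorb2)
qed

lemma (in prob_space) integral_suminf_indicator:
  fixes c :: "nat \<Rightarrow> real" and f :: "'a \<Rightarrow> real"
  assumes sets: "\<And>k. A k \<in> sets M" and nonneg: "\<And>k. 0 \<le> c k"
    and summable: "summable (\<lambda>k. c k * prob (A k))"
    and sums: "\<And>\<omega>. \<omega> \<in> space M \<Longrightarrow> (\<lambda>k. c k * indicator (A k) \<omega>) sums f \<omega>"
  shows "integrable M f" and "(\<integral>\<omega>. f \<omega> \<partial>M) = (\<Sum>k. c k * prob (A k))"
proof -
  let ?g = "\<lambda>k \<omega>. c k * indicator (A k) \<omega> :: real"
  have int: "integrable M (?g k)" for k
    using sets by (intro integrable_mult_right integrable_real_indicator) (auto simp: less_top[symmetric] emeasure_finite)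
  have ae: "AE \<omega> in M. summable (\<lambda>k. norm (?g k \<omega>))"
    using sums nonneg by (intro AE_I2) (auto simp: sums_iff)
  have "(\<lambda>k. \<integral>\<omega>. norm (?g k \<omega>) \<partial>M) = (\<lambda>k. c k * prob (A k))"
    using sets nonneg by (auto simp: fun_eq_iff Int_absorb2)
  then have sum_int: "summable (\<lambda>k. \<integral>\<omega>. norm (?g k \<omega>) \<partial>M)" using summable by simp
  have f: "\<And>\<omega>. \<omega> \<in> space M \<Longrightarrow> f \<omega> = (\<Sum>k. ?g k \<omega>)"
    using sums by (simp add: sums_iff)
  show "integrable M f"
    by (rule Bochner_Integration.integrable_cong[OF refl, THEN iffD1, OF _ integrable_suminf[OF int ae sum_int]])
      (simp add: f)
  have "(\<integral>\<omega>. f \<omega> \<partial>M) = (\<integral>\<omega>. (\<Sum>k. ?g k \<omega>) \<partial>M)"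
    by (rule Bochner_Integration.integral_cong) (auto simp: f)
  also have "\<dots> = (\<Sum>k. c k * prob (A k))"
    using integral_suminf[OF int ae sum_int] sets by (simp add: Int_absorb2)
  finally show "(\<integral>\<omega>. f \<omega> \<partial>M) = (\<Sum>k. c k * prob (A k))" .
qed

lemma Sup_int_mem:
  fixes A :: "int set"
  assumes "A \<noteq> {}" "bdd_above A"
  shows "Sup A \<in> A"
proof -
  obtain x where x: "x \<in> A" using assms(1) by blast
  obtain y where y: "\<forall>z\<in>A. z \<le> y" using assms(2) by (auto simp: bdd_above_def)
  let ?m = "Max (A \<inter> {x..y})"
  have fin: "finite (A \<inter> {x..y})" by simp
  have "A \<inter> {x..y} \<noteq> {}" using x y by auto
  then have m: "?m \<in> A" using Max_in[OF fin] by auto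
  have xm: "x \<le> ?m" using x y fin by (intro Max_ge) auto
  have "z \<le> ?m" if "z \<in> A" for z
    using that y fin xm by (cases "x \<le> z") (auto intro: Max_ge)
  then have "Sup A = ?m" by (intro cSup_eq_maximum m)
  then show ?thesis using m by simp
qed

lemma Sup_int_not_bdd_above: "\<not> bdd_above (A :: int set) \<Longrightarrow> Sup A = Sup (UNIV :: int set)"
  unfolding Sup_int_def bdd_above_def by (metis UNIV_I)

lemma diff_mult_sum_powers:
  fixes s r :: real
  shows "(s - r) * (\<Sum>k<m. s ^ (m - k) * r ^ k) = s * (s ^ m - r ^ m)"
proof -
  have "(\<Sum>k<m. s ^ (m - k) * r ^ k) = s * (\<Sum>k<m. s ^ (m - Suc k) * r ^ k)"
    unfolding sum_distrib_left by (intro sum.cong refl) (simp add: Suc_diff_Suc flip: power_Suc)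
  moreover have "(s - r) * (\<Sum>k<m. s ^ (m - Suc k) * r ^ k) = s ^ m - r ^ m"
    using power_diff_sumr2[of r m s] by (simp add: algebra_simps)
  ultimately show ?thesis by simp
qed

definition pos_power :: "real \<Rightarrow> int \<Rightarrow> real" where
  "pos_power s x = (if 0 < x then s ^ nat x else 0)"

definition pos_geom_sum :: "real \<Rightarrow> int \<Rightarrow> real" where
  "pos_geom_sum s x = (if 0 < x then (\<Sum>j<nat x. s ^ j) else 0)"

lemma pos_power_eq_pos_geom_sum: "pos_power s x = (if 0 < x then 1 else 0) - (1 - s) * pos_geom_sum s x"
  using one_diff_power_eq[of s "nat x"] by (simp add: pos_power_def pos_geom_sum_def)

lemma pos_geom_sum_bounds:
  assumes "0 \<le> s" "s \<le> 1"
  shows "0 \<le> pos_geom_sum s x" "pos_geom_sum s x \<le> real_of_int (max 0 x)"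
proof -
  have "(\<Sum>j<nat x. s ^ j) \<le> (\<Sum>j<nat x. 1::real)"
    using assms by (intro sum_mono power_le_one) auto
  then show "0 \<le> pos_geom_sum s x" "pos_geom_sum s x \<le> real_of_int (max 0 x)"
    using assms by (auto simp: pos_geom_sum_def intro: sum_nonneg)
qed

lemma power_max_shift_decomp:
  "s ^ nat (max 0 (x + int m)) = s ^ m * pos_power s x
     + (\<Sum>k<m. s ^ (m - k) * (if x = - int k then 1 else 0)) + (if x \<le> - int m then 1 else 0)"
proof -
  consider "0 < x" | "x \<le> 0" "- int m < x" | "x \<le> - int m" by linarith
  then show ?thesis
  proof cases
    case 1
    then have "nat (max 0 (x + int m)) = nat x + m" by simp
    then show ?thesis using 1 by (simp add: pos_power_def power_add sum.neutral)
  next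
    case 2
    define k0 where "k0 = nat (- x)"
    have k0: "k0 < m" "x = - int k0" using 2 by (auto simp: k0_def)
    have "(\<Sum>k<m. s ^ (m - k) * (if x = - int k then 1 else 0)) = (\<Sum>k<m. if k = k0 then s ^ (m - k) else 0)"
      using k0 by (intro sum.cong) auto
    also have "\<dots> = s ^ (m - k0)" using k0 by (simp add: sum.delta)
    moreover have "nat (max 0 (x + int m)) = m - k0" using k0 by simp
    ultimately show ?thesis using 2 k0 by (simp add: pos_power_def)
  qed (simp_all add: pos_power_def sum.neutral)
qed

definition partial_sum :: "nat \<Rightarrow> (nat \<Rightarrow> int) \<Rightarrow> int" where
  "partial_sum k v = (\<Sum>i<k. v i)"

definition partial_max :: "nat \<Rightarrow> (nat \<Rightarrow> int) \<Rightarrow> int" where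
  "partial_max n v = (MAX k\<in>{..n}. partial_sum k v)"

lemma rw_S_eq_partial_sum: "rw_S X k \<omega> = partial_sum k (\<lambda>i. X i \<omega>)"
  by (simp add: rw_S_def partial_sum_def)

lemma partial_sum_cong: "k \<le> n \<Longrightarrow> (\<And>i. i < n \<Longrightarrow> v i = w i) \<Longrightarrow> partial_sum k v = partial_sum k w"
  unfolding partial_sum_def by (intro sum.cong) auto

lemma partial_max_cong: "(\<And>i. i < n \<Longrightarrow> v i = w i) \<Longrightarrow> partial_max n v = partial_max n w"
  unfolding partial_max_def by (intro arg_cong[where f=Max] image_cong refl partial_sum_cong) auto

lemma partial_sum_Suc_shift: "partial_sum (Suc k) v = v 0 + partial_sum k (\<lambda>i. v (Suc i))"
  unfolding partial_sum_def by (rule sum.lessThan_Suc_shift)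

lemma partial_sum_add: "partial_sum (k + m) v = partial_sum k v + partial_sum m (\<lambda>i. v (k + i))"
  by (induction m) (auto simp: partial_sum_def)

lemma partial_sum_le_partial_max: "k \<le> n \<Longrightarrow> partial_sum k v \<le> partial_max n v"
  unfolding partial_max_def by (intro Max_ge) auto

lemma partial_max_attained: "\<exists>k\<le>n. partial_max n v = partial_sum k v"
proof -
  have "partial_max n v \<in> (\<lambda>k. partial_sum k v) ` {..n}"
    unfolding partial_max_def by (intro Max_in) auto
  then show ?thesis by auto
qed

lemma partial_max_nonneg: "0 \<le> partial_max n v"
  using partial_sum_le_partial_max[of 0 n v] by (simp add: partial_sum_def)

lemma partial_max_le_Suc: "partial_max n v \<le> partial_max (Suc n) v"
  using partial_max_attained[of n v] partial_sum_le_partial_max[of _ "Suc n" v] by fastforce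

lemma partial_max_le_sum_abs: "partial_max n v \<le> (\<Sum>i<n. \<bar>v i\<bar>)"
proof -
  obtain k where k: "k \<le> n" "partial_max n v = partial_sum k v"
    using partial_max_attained by blast
  have "partial_sum k v \<le> (\<Sum>i<k. \<bar>v i\<bar>)" unfolding partial_sum_def by (intro sum_mono) simp
  also have "\<dots> \<le> (\<Sum>i<n. \<bar>v i\<bar>)" using k(1) by (intro sum_mono2) auto
  finally show ?thesis using k(2) by simp
qed

text \<open>Lindley's recursion, read backwards in time: prepending a step to the sequence.\<close>
lemma partial_max_Suc: "partial_max (Suc n) v = max 0 (v 0 + partial_max n (\<lambda>i. v (Suc i)))"
proof (rule antisym)
  obtain k where k: "k \<le> Suc n" "partial_max (Suc n) v = partial_sum k v"
    using partial_max_attained by blast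
  show "partial_max (Suc n) v \<le> max 0 (v 0 + partial_max n (\<lambda>i. v (Suc i)))"
  proof (cases k)
    case 0 then show ?thesis using k by (simp add: partial_sum_def)
  next
    case (Suc j)
    then have "partial_sum k v \<le> v 0 + partial_max n (\<lambda>i. v (Suc i))"
      using k(1) by (simp add: partial_sum_Suc_shift partial_sum_le_partial_max)
    then show ?thesis using k by simp
  qed
next
  obtain j where j: "j \<le> n" "partial_max n (\<lambda>i. v (Suc i)) = partial_sum j (\<lambda>i. v (Suc i))"
    using partial_max_attained by blast
  have "v 0 + partial_max n (\<lambda>i. v (Suc i)) = partial_sum (Suc j) v"
    using j by (simp add: partial_sum_Suc_shift)
  also have "\<dots> \<le> partial_max (Suc n) v" using j by (intro partial_sum_le_partial_max) simp
  finally show "max 0 (v 0 + partial_max n (\<lambda>i. v (Suc i))) \<le> partial_max (Suc n) v"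
    using partial_max_nonneg[of "Suc n" v] by simp
qed

lemma partial_sum_reversed:
  assumes "k \<le> Suc n"
  shows "partial_sum k (\<lambda>i. v (n - i)) = partial_sum (Suc n) v - partial_sum (Suc n - k) v"
  using assms
proof (induction k)
  case (Suc k)
  then have "Suc n - k = Suc (n - k)" by simp
  then show ?case using Suc by (simp add: partial_sum_def)
qed (simp add: partial_sum_def)

lemma ladder_reversal_iff:
  "((\<forall>k\<in>{1..<Suc n}. partial_sum k (\<lambda>i. v (n - i)) < 0) \<and> partial_sum (Suc n) (\<lambda>i. v (n - i)) = 0)
   \<longleftrightarrow> ((\<forall>k\<in>{1..<Suc n}. 0 < partial_sum k v) \<and> partial_sum (Suc n) v = 0)"
proof -
  have rev: "(\<forall>k\<in>{1..<Suc n}. P (Suc n - k)) \<longleftrightarrow> (\<forall>j\<in>{1..<Suc n}. P j)" for P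
  proof (intro iffI ballI)
    fix j assume "\<forall>k\<in>{1..<Suc n}. P (Suc n - k)" "j \<in> {1..<Suc n}"
    moreover have "Suc n - j \<in> {1..<Suc n}" "Suc n - (Suc n - j) = j"
      using \<open>j \<in> {1..<Suc n}\<close> by auto
    ultimately show "P j" by metis
  qed auto
  show ?thesis
    using rev[of "\<lambda>j. 0 < partial_sum j v"] partial_sum_reversed[of _ n v]
    by (auto simp: partial_sum_def)
qed

section \<open>Random walks with i.i.d.\ integer steps\<close>

locale iid_int_walk = prob_space M for M :: "'a measure" +
  fixes X :: "nat \<Rightarrow> 'a \<Rightarrow> int"
  assumes indep: "indep_vars (\<lambda>_. count_space UNIV) X UNIV"
    and ident: "\<And>i. distr M (count_space UNIV) (X i) = distr M (count_space UNIV) (X 0)"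
begin

lemma X_measurable[measurable]: "X i \<in> M \<rightarrow>\<^sub>M count_space UNIV"
  using indep by (auto simp: indep_vars_def)

lemma sets_step_Collect: "{\<omega> \<in> space M. P (X i \<omega>)} \<in> sets M"
proof -
  have "{\<omega> \<in> space M. P (X i \<omega>)} = X i -` {x. P x} \<inter> space M" by auto
  then show ?thesis using measurable_sets[OF X_measurable, of "{x. P x}" i] by simp
qed

lemma borel_measurable_step: "(\<lambda>\<omega>. (f (X i \<omega>) :: real)) \<in> borel_measurable M"
  by (rule measurable_compose[OF X_measurable]) (simp add: measurable_count_space_eq1)

lemma measurable_steps[measurable]: "(\<lambda>\<omega>. \<lambda>i\<in>I. X (\<sigma> i) \<omega>) \<in> M \<rightarrow>\<^sub>M int_vectors I"
  by measurable

lemma measurable_function_of_steps: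
  assumes "finite I" "g \<in> space (int_vectors I) \<rightarrow> space N"
  shows "(\<lambda>\<omega>. g (\<lambda>i\<in>I. X (\<sigma> i) \<omega>)) \<in> M \<rightarrow>\<^sub>M N"
  using measurable_compose[OF measurable_steps measurable_int_vectors[OF assms]] by simp

lemma measurable_partial_max[measurable]:
  "(\<lambda>\<omega>. partial_max n (\<lambda>i. X i \<omega>)) \<in> M \<rightarrow>\<^sub>M count_space UNIV"
proof -
  have "(\<lambda>\<omega>. partial_max n (\<lambda>i\<in>{..<n}. X (id i) \<omega>)) \<in> M \<rightarrow>\<^sub>M count_space UNIV"
    by (rule measurable_function_of_steps) auto
  moreover have "partial_max n (\<lambda>i\<in>{..<n}. X (id i) \<omega>) = partial_max n (\<lambda>i. X i \<omega>)" for \<omega>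
    by (rule partial_max_cong) simp
  ultimately show ?thesis by simp
qed

definition step_distr :: "int measure" where
  "step_distr = distr M (count_space UNIV) (X 0)"

lemma prob_space_step_distr: "prob_space step_distr"
  unfolding step_distr_def by (rule prob_space_distr) simp

lemma distr_step: "distr M (count_space UNIV) (X i) = step_distr"
  using ident[of i] by (simp add: step_distr_def)

lemma distr_steps:
  assumes "inj_on \<sigma> I"
  shows "distr M (int_vectors I) (\<lambda>\<omega>. \<lambda>i\<in>I. X (\<sigma> i) \<omega>) = PiM I (\<lambda>_. step_distr)"
proof -
  have all: "distr M (int_vectors UNIV) (\<lambda>\<omega>. \<lambda>i\<in>UNIV. X i \<omega>) = PiM UNIV (\<lambda>_. step_distr)"
    using indep_vars_iff_distr_eq_PiM[THEN iffD1, OF _ _ indep] by (simp add: distr_step)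
  define g where "g = (\<lambda>v. \<lambda>i\<in>I. (v::nat \<Rightarrow> int) (\<sigma> i))"
  have g: "g \<in> int_vectors UNIV \<rightarrow>\<^sub>M int_vectors I"
    unfolding g_def by measurable
  have "(\<lambda>\<omega>. \<lambda>i\<in>I. X (\<sigma> i) \<omega>) = g \<circ> (\<lambda>\<omega>. \<lambda>i\<in>UNIV. X i \<omega>)"
    by (auto simp: g_def fun_eq_iff)
  then have "distr M (int_vectors I) (\<lambda>\<omega>. \<lambda>i\<in>I. X (\<sigma> i) \<omega>)
      = distr (distr M (int_vectors UNIV) (\<lambda>\<omega>. \<lambda>i\<in>UNIV. X i \<omega>)) (int_vectors I) g"
    by (simp add: distr_distr[OF g])
  also have "\<dots> = distr (PiM UNIV (\<lambda>_. step_distr)) (PiM I (\<lambda>i. step_distr)) g"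
    unfolding all by (intro distr_cong refl sets_PiM_cong) (auto simp: step_distr_def)
  also have "\<dots> = PiM I (\<lambda>_. step_distr)"
    unfolding g_def using assms by (intro distr_PiM_reindex) (auto simp: prob_space_step_distr)
  finally show ?thesis .
qed

lemma distr_steps_reindex:
  "inj_on \<sigma> I \<Longrightarrow> distr M (int_vectors I) (\<lambda>\<omega>. \<lambda>i\<in>I. X (\<sigma> i) \<omega>) = distr M (int_vectors I) (\<lambda>\<omega>. \<lambda>i\<in>I. X i \<omega>)"
  using distr_steps[of \<sigma> I] distr_steps[of id I] by simp

lemma integral_steps_reindex:
  fixes g :: "(nat \<Rightarrow> int) \<Rightarrow> real"
  assumes "inj_on \<sigma> I" "finite I"
  shows "(\<integral>\<omega>. g (\<lambda>i\<in>I. X (\<sigma> i) \<omega>) \<partial>M) = (\<integral>\<omega>. g (\<lambda>i\<in>I. X i \<omega>) \<partial>M)"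
    and "integrable M (\<lambda>\<omega>. g (\<lambda>i\<in>I. X (\<sigma> i) \<omega>)) \<longleftrightarrow> integrable M (\<lambda>\<omega>. g (\<lambda>i\<in>I. X i \<omega>))"
proof -
  have g: "g \<in> borel_measurable (int_vectors I)" using assms(2) by measurable
  show "(\<integral>\<omega>. g (\<lambda>i\<in>I. X (\<sigma> i) \<omega>) \<partial>M) = (\<integral>\<omega>. g (\<lambda>i\<in>I. X i \<omega>) \<partial>M)"
    using integral_distr[OF measurable_steps g, of \<sigma>] integral_distr[OF measurable_steps g, of id]
    by (simp add: distr_steps_reindex[OF assms(1)])
  show "integrable M (\<lambda>\<omega>. g (\<lambda>i\<in>I. X (\<sigma> i) \<omega>)) \<longleftrightarrow> integrable M (\<lambda>\<omega>. g (\<lambda>i\<in>I. X i \<omega>))"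
    using integrable_distr_eq[OF measurable_steps g, of \<sigma>] integrable_distr_eq[OF measurable_steps g, of id]
    by (simp add: distr_steps_reindex[OF assms(1)])
qed

lemma prob_steps_reindex:
  assumes "inj_on \<sigma> I" "{v \<in> space (int_vectors I). P v} \<in> sets (int_vectors I)"
  shows "prob {\<omega> \<in> space M. P (\<lambda>i\<in>I. X (\<sigma> i) \<omega>)} = prob {\<omega> \<in> space M. P (\<lambda>i\<in>I. X i \<omega>)}"
proof -
  have "prob {\<omega> \<in> space M. P (\<lambda>i\<in>I. X (\<tau> i) \<omega>)}
      = measure (distr M (int_vectors I) (\<lambda>\<omega>. \<lambda>i\<in>I. X (\<tau> i) \<omega>)) {v \<in> space (int_vectors I). P v}" for \<tau>
    by (subst measure_distr[OF measurable_steps assms(2)]) (auto simp: space_PiM intro!: arg_cong[where f=prob])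
  then show ?thesis using distr_steps_reindex[OF assms(1)] by simp
qed

lemma integrable_step_iff: "integrable M (\<lambda>\<omega>. f (X i \<omega>)) \<longleftrightarrow> integrable M (\<lambda>\<omega>. (f (X 0 \<omega>) :: real))"
  using integrable_distr_eq[of "X i" M "count_space UNIV" f] integrable_distr_eq[of "X 0" M "count_space UNIV" f]
  by (simp add: distr_step)

lemma integrable_indicator_step: "integrable M (\<lambda>\<omega>. if P (X 0 \<omega>) then 1 else (0::real))"
  by (rule integrable_const_bound[where B=1]) (auto intro: borel_measurable_step)

lemma integral_indicator_step: "(\<integral>\<omega>. (if P (X 0 \<omega>) then 1 else 0) \<partial>M) = prob {\<omega> \<in> space M. P (X 0 \<omega>)}"
  by (rule prob_eq_integral_if[symmetric, OF sets_step_Collect])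

lemma distr_history_and_step:
  "distr M (int_vectors {..<n} \<Otimes>\<^sub>M int_vectors {n}) (\<lambda>\<omega>. (\<lambda>i\<in>{..<n}. X i \<omega>, \<lambda>i\<in>{n}. X i \<omega>))
   = distr M (int_vectors {..<n}) (\<lambda>\<omega>. \<lambda>i\<in>{..<n}. X i \<omega>) \<Otimes>\<^sub>M distr M (int_vectors {n}) (\<lambda>\<omega>. \<lambda>i\<in>{n}. X 0 \<omega>)"
proof -
  have "indep_var (int_vectors {..<n}) (\<lambda>\<omega>. \<lambda>i\<in>{..<n}. X i \<omega>) (int_vectors {n}) (\<lambda>\<omega>. \<lambda>i\<in>{n}. X i \<omega>)"
    by (rule indep_var_restrict[OF indep]) auto
  moreover have "distr M (int_vectors {n}) (\<lambda>\<omega>. \<lambda>i\<in>{n}. X i \<omega>) = distr M (int_vectors {n}) (\<lambda>\<omega>. \<lambda>i\<in>{n}. X 0 \<omega>)"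
    using distr_steps_reindex[of "\<lambda>_. 0" "{n}"] by simp
  ultimately show ?thesis by (simp add: indep_var_distribution_eq)
qed

lemma integral_last_step:
  fixes F :: "(nat \<Rightarrow> int) \<Rightarrow> int \<Rightarrow> real"
  assumes int: "integrable M (\<lambda>\<omega>. F (\<lambda>i\<in>{..<n}. X i \<omega>) (X n \<omega>))"
  shows "(\<integral>\<omega>. F (\<lambda>i\<in>{..<n}. X i \<omega>) (X n \<omega>) \<partial>M)
       = (\<integral>\<omega>. (\<integral>\<omega>'. F (\<lambda>i\<in>{..<n}. X i \<omega>) (X 0 \<omega>') \<partial>M) \<partial>M)"
proof -
  let ?hist = "\<lambda>\<omega>. \<lambda>i\<in>{..<n}. X i \<omega>"
  define \<nu> where "\<nu> = distr M (int_vectors {..<n}) ?hist"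
  define \<kappa> where "\<kappa> = distr M (int_vectors {n}) (\<lambda>\<omega>. \<lambda>i\<in>{n}. X 0 \<omega>)"
  interpret pp: pair_prob_space \<nu> \<kappa>
    unfolding pair_prob_space_def pair_sigma_finite_def \<nu>_def \<kappa>_def
    by (auto intro!: prob_space_distr prob_space_imp_sigma_finite)
  define F' where "F' = (\<lambda>(v, w). F v (w n))"
  have sets: "sets (\<nu> \<Otimes>\<^sub>M \<kappa>) = sets (int_vectors {..<n} \<Otimes>\<^sub>M int_vectors {n})"
    unfolding \<nu>_def \<kappa>_def by (intro sets_pair_measure_cong) simp_all
  have F': "F' \<in> borel_measurable (\<nu> \<Otimes>\<^sub>M \<kappa>)"
    by (subst measurable_cong_sets[OF sets refl]) measurable
  let ?D = "distr M (int_vectors {..<n} \<Otimes>\<^sub>M int_vectors {n}) (\<lambda>\<omega>. (?hist \<omega>, \<lambda>i\<in>{n}. X i \<omega>))"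
  have D: "?D = \<nu> \<Otimes>\<^sub>M \<kappa>"
    unfolding \<nu>_def \<kappa>_def by (rule distr_history_and_step)
  have "(\<integral>\<omega>. F (?hist \<omega>) (X n \<omega>) \<partial>M) = integral\<^sup>L ?D F'"
    by (subst integral_distr) (auto simp: F'_def)
  also have "\<dots> = (\<integral>v. (\<integral>w. F' (v, w) \<partial>\<kappa>) \<partial>\<nu>)"
  proof (unfold D, rule pp.integral_fst'[symmetric])
    have "integrable ?D F'"
      by (subst integrable_distr_eq) (use int in \<open>auto simp: F'_def\<close>)
    then show "integrable (\<nu> \<Otimes>\<^sub>M \<kappa>) F'" by (simp add: D)
  qed
  also have "\<dots> = (\<integral>\<omega>. (\<integral>\<omega>'. F (?hist \<omega>) (X 0 \<omega>') \<partial>M) \<partial>M)"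
    unfolding \<nu>_def \<kappa>_def
    by (subst integral_distr; (subst integral_distr)?) (auto simp: F'_def)
  finally show ?thesis .
qed

lemma prob_last_step:
  "prob {\<omega> \<in> space M. P (\<lambda>i\<in>{..<n}. X i \<omega>) (X n \<omega>)}
   = (\<integral>\<omega>. prob {\<omega>' \<in> space M. P (\<lambda>i\<in>{..<n}. X i \<omega>) (X 0 \<omega>')} \<partial>M)"
proof -
  define F where "F v x = (if P v x then 1 else 0 :: real)" for v x
  have "(\<lambda>\<omega>. P (restrict (\<lambda>i\<in>{..<Suc n}. X (id i) \<omega>) {..<n}) (X n \<omega>)) \<in> M \<rightarrow>\<^sub>M count_space UNIV"
    using measurable_function_of_steps[of "{..<Suc n}" "\<lambda>v. P (restrict v {..<n}) (v n)"] by simp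
  then have pred: "Measurable.pred M (\<lambda>\<omega>. P (\<lambda>i\<in>{..<n}. X i \<omega>) (X n \<omega>))"
    by (simp add: Int_absorb1)
  have F: "(\<lambda>\<omega>. F (\<lambda>i\<in>{..<n}. X i \<omega>) (X n \<omega>)) \<in> borel_measurable M"
    unfolding F_def using pred by measurable
  have "prob {\<omega> \<in> space M. P (\<lambda>i\<in>{..<n}. X i \<omega>) (X n \<omega>)} = (\<integral>\<omega>. F (\<lambda>i\<in>{..<n}. X i \<omega>) (X n \<omega>) \<partial>M)"
    unfolding F_def by (rule prob_eq_integral_if) (use pred in measurable)
  also have "\<dots> = (\<integral>\<omega>. (\<integral>\<omega>'. F (\<lambda>i\<in>{..<n}. X i \<omega>) (X 0 \<omega>') \<partial>M) \<partial>M)"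
    by (rule integral_last_step, rule integrable_const_bound[where B=1, OF _ F]) (simp add: F_def)
  also have "\<dots> = (\<integral>\<omega>. prob {\<omega>' \<in> space M. P (\<lambda>i\<in>{..<n}. X i \<omega>) (X 0 \<omega>')} \<partial>M)"
  proof (intro Bochner_Integration.integral_cong refl)
    show "(\<integral>\<omega>'. F (\<lambda>i\<in>{..<n}. X i \<omega>) (X 0 \<omega>') \<partial>M) = prob {\<omega>' \<in> space M. P (\<lambda>i\<in>{..<n}. X i \<omega>) (X 0 \<omega>')}"
      for \<omega> unfolding F_def by (rule prob_eq_integral_if[symmetric, OF sets_step_Collect])
  qed
  finally show ?thesis .
qed

text \<open>Reversing the first \<open>n + 1\<close> steps preserves their joint law and turns the step prepended
  in \<open>partial_max_Suc\<close> into an independent last step.\<close>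
lemma integral_partial_max_Suc:
  fixes f :: "int \<Rightarrow> real"
  assumes int: "integrable M (\<lambda>\<omega>. f (partial_max (Suc n) (\<lambda>i. X i \<omega>)))"
  shows "(\<integral>\<omega>. f (partial_max (Suc n) (\<lambda>i. X i \<omega>)) \<partial>M)
       = (\<integral>\<omega>. (\<integral>\<omega>'. f (max 0 (X 0 \<omega>' + partial_max n (\<lambda>i. X i \<omega>))) \<partial>M) \<partial>M)"
proof -
  define g where "g v = f (partial_max (Suc n) v)" for v
  define F where "F v x = f (max 0 (x + partial_max n (\<lambda>i. v (n - Suc i))))" for v x
  define H where "H v = (\<integral>\<omega>'. f (max 0 (X 0 \<omega>' + partial_max n v)) \<partial>M)" for v
  have inj_Suc: "inj_on (\<lambda>i. n - i) {..<Suc n}" and inj: "inj_on (\<lambda>i. n - Suc i) {..<n}"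
    by (auto simp: inj_on_def)
  have g: "f (partial_max (Suc n) (\<lambda>i. X i \<omega>)) = g (\<lambda>i\<in>{..<Suc n}. X i \<omega>)" for \<omega>
    unfolding g_def by (intro arg_cong[where f=f] partial_max_cong) simp
  have F: "g (\<lambda>i\<in>{..<Suc n}. X (n - i) \<omega>) = F (\<lambda>i\<in>{..<n}. X i \<omega>) (X n \<omega>)" for \<omega>
    unfolding g_def F_def partial_max_Suc
    by (intro arg_cong[where f=f] arg_cong[where f="max 0"] arg_cong2[where f="(+)"] partial_max_cong) auto
  have H: "(\<integral>\<omega>'. F (\<lambda>i\<in>{..<n}. X i \<omega>) (X 0 \<omega>') \<partial>M) = H (\<lambda>i\<in>{..<n}. X (n - Suc i) \<omega>)"
    and H': "H (\<lambda>i\<in>{..<n}. X i \<omega>) = (\<integral>\<omega>'. f (max 0 (X 0 \<omega>' + partial_max n (\<lambda>i. X i \<omega>))) \<partial>M)"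
    for \<omega> unfolding F_def H_def
    by (intro Bochner_Integration.integral_cong refl arg_cong[where f=f] arg_cong[where f="max 0"]
        arg_cong2[where f="(+)"] partial_max_cong; auto)+
  have "integrable M (\<lambda>\<omega>. g (\<lambda>i\<in>{..<Suc n}. X (n - i) \<omega>))"
    using int integral_steps_reindex(2)[OF inj_Suc, of g] by (simp add: g)
  then have int_F: "integrable M (\<lambda>\<omega>. F (\<lambda>i\<in>{..<n}. X i \<omega>) (X n \<omega>))" by (simp add: F)
  have "(\<integral>\<omega>. f (partial_max (Suc n) (\<lambda>i. X i \<omega>)) \<partial>M) = (\<integral>\<omega>. g (\<lambda>i\<in>{..<Suc n}. X (n - i) \<omega>) \<partial>M)"
    unfolding g by (rule integral_steps_reindex(1)[symmetric, OF inj_Suc]) simp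
  also have "\<dots> = (\<integral>\<omega>. (\<integral>\<omega>'. F (\<lambda>i\<in>{..<n}. X i \<omega>) (X 0 \<omega>') \<partial>M) \<partial>M)"
    unfolding F by (rule integral_last_step[OF int_F])
  also have "\<dots> = (\<integral>\<omega>. H (\<lambda>i\<in>{..<n}. X i \<omega>) \<partial>M)"
    unfolding H by (rule integral_steps_reindex(1)[OF inj]) simp
  finally show ?thesis by (simp add: H')
qed

definition walk_bounded :: "'a \<Rightarrow> bool" where
  "walk_bounded \<omega> \<longleftrightarrow> (\<exists>b. \<forall>n. partial_sum n (\<lambda>i. X i \<omega>) \<le> b)"

definition walk_sup :: "'a \<Rightarrow> int" where
  "walk_sup \<omega> = Sup (range (\<lambda>n. partial_sum n (\<lambda>i. X i \<omega>)))"

lemma measurable_walk_bounded[measurable]: "Measurable.pred M walk_bounded"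
  unfolding walk_bounded_def partial_sum_def by measurable

lemma tendsto_power_partial_max:
  assumes s: "0 \<le> (s::real)" "s < 1"
  shows "(\<lambda>n. s ^ nat (partial_max n (\<lambda>i. X i \<omega>))) \<longlonglongrightarrow> (if walk_bounded \<omega> then s ^ nat (walk_sup \<omega>) else 0)"
proof (cases "walk_bounded \<omega>")
  case True
  let ?S = "\<lambda>n. partial_sum n (\<lambda>i. X i \<omega>)"
  have bdd: "bdd_above (range ?S)" using True by (auto simp: walk_bounded_def bdd_above_def)
  obtain k0 where k0: "walk_sup \<omega> = ?S k0"
    using Sup_int_mem[OF _ bdd] unfolding walk_sup_def by auto
  have "partial_max n (\<lambda>i. X i \<omega>) = walk_sup \<omega>" if "k0 \<le> n" for n
  proof (rule antisym)
    obtain k where "k \<le> n" "partial_max n (\<lambda>i. X i \<omega>) = ?S k" using partial_max_attained by blast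
    then show "partial_max n (\<lambda>i. X i \<omega>) \<le> walk_sup \<omega>"
      unfolding walk_sup_def using bdd by (auto intro: cSup_upper)
    show "walk_sup \<omega> \<le> partial_max n (\<lambda>i. X i \<omega>)" using k0 partial_sum_le_partial_max[OF that] by simp
  qed
  then have "(\<lambda>n. s ^ nat (partial_max n (\<lambda>i. X i \<omega>))) \<longlonglongrightarrow> s ^ nat (walk_sup \<omega>)"
    by (intro tendsto_eventually eventually_sequentiallyI[of k0]) simp
  then show ?thesis using True by simp
next
  case False
  have lim: "filterlim (\<lambda>n. nat (partial_max n (\<lambda>i. X i \<omega>))) at_top sequentially"
  proof (subst filterlim_at_top, intro allI)
    fix Z :: nat
    obtain k where k: "partial_sum k (\<lambda>i. X i \<omega>) > int Z"
      using False unfolding walk_bounded_def not_ex not_all by (meson not_le)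
    show "eventually (\<lambda>n. Z \<le> nat (partial_max n (\<lambda>i. X i \<omega>))) sequentially"
      using k partial_sum_le_partial_max[of k _ "\<lambda>i. X i \<omega>"]
      by (intro eventually_sequentiallyI[of k]) fastforce
  qed
  then have "(\<lambda>n. s ^ nat (partial_max n (\<lambda>i. X i \<omega>))) \<longlonglongrightarrow> 0"
    using filterlim_compose[OF LIMSEQ_realpow_zero[OF s] lim] by simp
  then show ?thesis using False by simp
qed

lemma borel_measurable_power_walk_sup:
  assumes s: "0 \<le> (s::real)" "s < 1"
  shows "(\<lambda>\<omega>. if walk_bounded \<omega> then s ^ nat (walk_sup \<omega>) else 0) \<in> borel_measurable M"
  by (rule borel_measurable_LIMSEQ_real[OF tendsto_power_partial_max[OF s]])
    (rule borel_measurable_count_space_comp[OF measurable_partial_max])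

definition stays_positive_from :: "nat \<Rightarrow> 'a set" where
  "stays_positive_from k = {\<omega> \<in> space M. \<forall>j. 0 < partial_sum (Suc j) (\<lambda>i. X (k + i) \<omega>)}"

lemma sets_stays_positive_from[measurable]: "stays_positive_from k \<in> sets M"
  unfolding stays_positive_from_def partial_sum_def by measurable

lemma prob_stays_positive_from: "prob (stays_positive_from k) = prob (stays_positive_from 0)"
proof -
  have "{v \<in> space (int_vectors UNIV). \<forall>j. 0 < partial_sum (Suc j) v} \<in> sets (int_vectors UNIV)"
    unfolding partial_sum_def by measurable
  from prob_steps_reindex[OF _ this, of "(+) k"]
  show ?thesis by (simp add: stays_positive_from_def restrict_def)
qed

lemma partial_sum_less_if_stays_positive:
  assumes "\<omega> \<in> stays_positive_from k" "k < k'"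
  shows "partial_sum k (\<lambda>i. X i \<omega>) < partial_sum k' (\<lambda>i. X i \<omega>)"
proof -
  have "partial_sum k' (\<lambda>i. X i \<omega>) = partial_sum k (\<lambda>i. X i \<omega>) + partial_sum (Suc (k' - Suc k)) (\<lambda>i. X (k + i) \<omega>)"
    using partial_sum_add[of k "Suc (k' - Suc k)" "\<lambda>i. X i \<omega>"] assms(2) by simp
  then show ?thesis using assms(1) by (auto simp: stays_positive_from_def)
qed

text \<open>Along the times \<open>k\<close> after which the walk stays above its current value, it increases
  strictly.\<close>
lemma not_walk_bounded_if_stays_positive_frequently:
  assumes "\<And>N. \<exists>k\<ge>N. \<omega> \<in> stays_positive_from k"
  shows "\<not> walk_bounded \<omega>"
proof
  assume "walk_bounded \<omega>"
  then obtain b where b: "\<And>n. partial_sum n (\<lambda>i. X i \<omega>) \<le> b" by (auto simp: walk_bounded_def)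
  obtain k1 where k1: "\<omega> \<in> stays_positive_from k1" using assms by blast
  have "\<exists>k. \<omega> \<in> stays_positive_from k \<and> partial_sum k1 (\<lambda>i. X i \<omega>) + int K \<le> partial_sum k (\<lambda>i. X i \<omega>)" for K
  proof (induction K)
    case (Suc K)
    then obtain k where k: "\<omega> \<in> stays_positive_from k"
      "partial_sum k1 (\<lambda>i. X i \<omega>) + int K \<le> partial_sum k (\<lambda>i. X i \<omega>)" by blast
    obtain k' where "k' \<ge> Suc k" "\<omega> \<in> stays_positive_from k'" using assms by blast
    with k partial_sum_less_if_stays_positive[OF k(1), of k'] show ?case by force
  qed (use k1 in auto)
  from this[of "nat (b - partial_sum k1 (\<lambda>i. X i \<omega>)) + 1"] obtain k
    where "partial_sum k1 (\<lambda>i. X i \<omega>) + int (nat (b - partial_sum k1 (\<lambda>i. X i \<omega>)) + 1)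
             \<le> partial_sum k (\<lambda>i. X i \<omega>)" by blast
  then show False using b[of k] by linarith
qed

lemma prob_stays_positive_eq_0:
  assumes "prob {\<omega> \<in> space M. walk_bounded \<omega>} = 1"
  shows "prob (stays_positive_from 0) = 0"
proof -
  define U where "U N = (\<Union>k\<in>{N..}. stays_positive_from k)" for N
  have U_sets: "U N \<in> sets M" for N unfolding U_def by measurable
  have "(\<lambda>N. prob (U N)) \<longlonglongrightarrow> prob (\<Inter>N. U N)"
  proof (rule finite_Lim_measure_decseq)
    show "decseq U" unfolding decseq_def U_def by (intro allI impI UN_mono) auto
  qed (use U_sets in auto)
  moreover have "prob (stays_positive_from 0) \<le> prob (U N)" for N
    using U_sets prob_stays_positive_from[of N]
    by (metis U_def atLeast_iff finite_measure_mono UN_upper order_refl)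
  ultimately have "prob (stays_positive_from 0) \<le> prob (\<Inter>N. U N)"
    by (intro LIMSEQ_le_const) auto
  also have "\<dots> \<le> prob (space M - {\<omega> \<in> space M. walk_bounded \<omega>})"
  proof (rule finite_measure_mono)
    show "(\<Inter>N. U N) \<subseteq> space M - {\<omega> \<in> space M. walk_bounded \<omega>}"
      using not_walk_bounded_if_stays_positive_frequently
      by (force simp: U_def stays_positive_from_def)
  qed measurable
  also have "\<dots> = 0" using prob_compl[of "{\<omega> \<in> space M. walk_bounded \<omega>}"] assms by simp
  finally show ?thesis using measure_nonneg[of M "stays_positive_from 0"] by linarith
qed

definition first_nonpos :: "nat \<Rightarrow> 'a set" where
  "first_nonpos n = {\<omega> \<in> space M. (\<forall>k\<in>{1..<Suc n}. 0 < partial_sum k (\<lambda>i. X i \<omega>))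
                                  \<and> partial_sum (Suc n) (\<lambda>i. X i \<omega>) \<le> 0}"

lemma sets_first_nonpos[measurable]: "first_nonpos n \<in> sets M"
  unfolding first_nonpos_def partial_sum_def by measurable

lemma disjoint_family_first_nonpos: "disjoint_family first_nonpos"
proof -
  have "\<omega> \<notin> first_nonpos m" if "\<omega> \<in> first_nonpos n" "m < n" for \<omega> m n
  proof -
    have "0 < partial_sum (Suc m) (\<lambda>i. X i \<omega>)" using that by (auto simp: first_nonpos_def)
    then show ?thesis by (auto simp: first_nonpos_def)
  qed
  then show ?thesis unfolding disjoint_family_on_def by (metis disjoint_iff nat_neq_iff)
qed

lemma UN_first_nonpos: "(\<Union>n. first_nonpos n) = space M - stays_positive_from 0"
proof (intro equalityI subsetI)
  fix \<omega> assume "\<omega> \<in> (\<Union>n. first_nonpos n)"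
  then obtain n where "\<omega> \<in> space M" "partial_sum (Suc n) (\<lambda>i. X i \<omega>) \<le> 0"
    by (auto simp: first_nonpos_def)
  then show "\<omega> \<in> space M - stays_positive_from 0"
    by (auto simp: stays_positive_from_def not_less)
next
  fix \<omega> assume \<omega>: "\<omega> \<in> space M - stays_positive_from 0"
  then have ex: "\<exists>j. partial_sum (Suc j) (\<lambda>i. X i \<omega>) \<le> 0" by (auto simp: stays_positive_from_def not_less)
  define n where "n = (LEAST j. partial_sum (Suc j) (\<lambda>i. X i \<omega>) \<le> 0)"
  have "partial_sum (Suc n) (\<lambda>i. X i \<omega>) \<le> 0" unfolding n_def by (rule LeastI_ex[OF ex])
  moreover have "0 < partial_sum k (\<lambda>i. X i \<omega>)" if "k \<in> {1..<Suc n}" for k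
    using that not_less_Least[of "k - 1" "\<lambda>j. partial_sum (Suc j) (\<lambda>i. X i \<omega>) \<le> 0"]
    by (fastforce simp: n_def)
  ultimately have "\<omega> \<in> first_nonpos n" using \<omega> by (auto simp: first_nonpos_def)
  then show "\<omega> \<in> (\<Union>n. first_nonpos n)" by blast
qed

lemma sums_prob_first_nonpos:
  assumes "prob (stays_positive_from 0) = 0"
  shows "(\<lambda>n. prob (first_nonpos n)) sums 1"
proof -
  have "(\<lambda>n. prob (first_nonpos n)) sums prob (\<Union>n. first_nonpos n)"
    by (rule measure_UNION[OF _ disjoint_family_first_nonpos]) (auto simp: emeasure_finite)
  then show ?thesis unfolding UN_first_nonpos using prob_compl[of "stays_positive_from 0"] assms by simp
qed

lemma prob_first_return_reversed:
  "prob {\<omega> \<in> space M. (\<forall>k\<in>{1..<Suc n}. rw_S X k \<omega> < 0) \<and> rw_S X (Suc n) \<omega> = 0}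
   = prob {\<omega> \<in> space M. (\<forall>k\<in>{1..<Suc n}. 0 < partial_sum k (\<lambda>i. X i \<omega>)) \<and> partial_sum (Suc n) (\<lambda>i. X i \<omega>) = 0}"
proof -
  define P where "P v \<longleftrightarrow> (\<forall>k\<in>{1..<Suc n}. partial_sum k v < 0) \<and> partial_sum (Suc n) v = 0" for v
  have restrict: "P (\<lambda>i\<in>{..<Suc n}. v i) \<longleftrightarrow> P v" for v
    unfolding P_def using partial_sum_cong[of _ "Suc n" "\<lambda>i\<in>{..<Suc n}. v i" v] by auto
  have "inj_on (\<lambda>i. n - i) {..<Suc n}" by (auto simp: inj_on_def)
  from prob_steps_reindex[OF this sets_int_vectors_Collect, of P]
  have "prob {\<omega> \<in> space M. P (\<lambda>i. X (n - i) \<omega>)} = prob {\<omega> \<in> space M. P (\<lambda>i. X i \<omega>)}"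
    using restrict[of "\<lambda>i. X (n - i) _"] restrict[of "\<lambda>i. X i _"] by simp
  moreover have "P (\<lambda>i. X (n - i) \<omega>) \<longleftrightarrow>
      (\<forall>k\<in>{1..<Suc n}. 0 < partial_sum k (\<lambda>i. X i \<omega>)) \<and> partial_sum (Suc n) (\<lambda>i. X i \<omega>) = 0" for \<omega>
    unfolding P_def by (rule ladder_reversal_iff)
  ultimately show ?thesis by (simp add: P_def rw_S_eq_partial_sum)
qed

end

section \<open>Steps with a geometric left tail\<close>

locale geometric_left_tail_walk = iid_int_walk +
  fixes \<xi> r :: real
  assumes integrable_step: "integrable M (\<lambda>\<omega>. real_of_int (X 0 \<omega>))"
    and mean_neg: "(\<integral>\<omega>. real_of_int (X 0 \<omega>) \<partial>M) < 0"
    and r: "0 < r" "r < 1"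
    and left_tail: "\<And>x::int. x \<le> 0 \<Longrightarrow> prob {\<omega> \<in> space M. X 0 \<omega> \<le> x} = \<xi> * r ^ nat (- x)"
begin

definition mean :: real where "mean = (\<integral>\<omega>. real_of_int (X 0 \<omega>) \<partial>M)"

lemma prob_step_le_neg: "prob {\<omega> \<in> space M. X 0 \<omega> \<le> - int k} = \<xi> * r ^ k"
  using left_tail[of "- int k"] by simp

lemma prob_step_eq_neg: "prob {\<omega> \<in> space M. X 0 \<omega> = - int k} = \<xi> * (1 - r) * r ^ k"
proof -
  have "{\<omega> \<in> space M. X 0 \<omega> \<le> - int k}
      = {\<omega> \<in> space M. X 0 \<omega> = - int k} \<union> {\<omega> \<in> space M. X 0 \<omega> \<le> - int (Suc k)}"
    by auto
  moreover have "prob ({\<omega> \<in> space M. X 0 \<omega> = - int k} \<union> {\<omega> \<in> space M. X 0 \<omega> \<le> - int (Suc k)})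
      = prob {\<omega> \<in> space M. X 0 \<omega> = - int k} + prob {\<omega> \<in> space M. X 0 \<omega> \<le> - int (Suc k)}"
    by (rule finite_measure_Union) auto
  ultimately have "prob {\<omega> \<in> space M. X 0 \<omega> \<le> - int k}
      = prob {\<omega> \<in> space M. X 0 \<omega> = - int k} + prob {\<omega> \<in> space M. X 0 \<omega> \<le> - int (Suc k)}"
    by simp
  then show ?thesis using prob_step_le_neg[of k] prob_step_le_neg[of "Suc k"] by (simp add: algebra_simps)
qed

lemma prob_step_eq_neg_memoryless:
  "0 \<le> h \<Longrightarrow> prob {\<omega> \<in> space M. X 0 \<omega> = - h} = (1 - r) * prob {\<omega> \<in> space M. X 0 \<omega> \<le> - h}"
  using prob_step_eq_neg[of "nat h"] prob_step_le_neg[of "nat h"] by simp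

lemma prob_step_pos: "prob {\<omega> \<in> space M. 0 < X 0 \<omega>} = 1 - \<xi>"
proof -
  have "{\<omega> \<in> space M. 0 < X 0 \<omega>} = space M - {\<omega> \<in> space M. X 0 \<omega> \<le> 0}" by auto
  then show ?thesis using prob_compl[of "{\<omega> \<in> space M. X 0 \<omega> \<le> 0}"] left_tail[of 0] by simp
qed

lemma neg_part_shifted:
  shows "integrable M (\<lambda>\<omega>. real_of_int (max 0 (- X 0 \<omega> - int m)))"
    and "(\<integral>\<omega>. real_of_int (max 0 (- X 0 \<omega> - int m)) \<partial>M) = \<xi> * r ^ Suc m / (1 - r)"
proof -
  define A where "A k = {\<omega> \<in> space M. X 0 \<omega> \<le> - int (Suc (m + k))}" for k
  have "prob (A k) = \<xi> * r ^ Suc m * r ^ k" for k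
    using prob_step_le_neg[of "Suc (m + k)"] by (simp add: A_def power_add mult.assoc)
  then have prob_A: "(\<lambda>k. 1 * prob (A k)) = (\<lambda>k. \<xi> * r ^ Suc m * r ^ k)" by simp
  have geom: "(\<lambda>k. \<xi> * r ^ Suc m * r ^ k) sums (\<xi> * r ^ Suc m / (1 - r))"
    using sums_mult[OF geometric_sums[of r], of "\<xi> * r ^ Suc m"] r by (simp add: divide_simps)
  have sums: "(\<lambda>k. 1 * indicator (A k) \<omega>) sums real_of_int (max 0 (- X 0 \<omega> - int m))"
    if "\<omega> \<in> space M" for \<omega>
  proof -
    define N where "N = nat (- X 0 \<omega> - int m)"
    have A: "indicator (A k) \<omega> = (if k < N then 1 else 0 :: real)" for k
      using that by (auto simp: A_def N_def)
    have "(\<lambda>k. 1 * indicator (A k) \<omega>) sums (\<Sum>k<N. 1 * indicator (A k) \<omega> :: real)"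
      by (rule sums_finite) (auto simp: A)
    moreover have "(\<Sum>k<N. 1 * indicator (A k) \<omega> :: real) = real_of_int (max 0 (- X 0 \<omega> - int m))"
      by (simp add: A N_def)
    ultimately show ?thesis by simp
  qed
  have A_sets: "A k \<in> sets M" for k by (simp add: A_def)
  have "summable (\<lambda>k. 1 * prob (A k))" using geom prob_A by (simp add: sums_iff)
  note * = integral_suminf_indicator[OF A_sets _ this sums]
  show "integrable M (\<lambda>\<omega>. real_of_int (max 0 (- X 0 \<omega> - int m)))"
    using * by simp
  show "(\<integral>\<omega>. real_of_int (max 0 (- X 0 \<omega> - int m)) \<partial>M) = \<xi> * r ^ Suc m / (1 - r)"
    using *(2) geom unfolding prob_A by (simp add: sums_iff)
qed

lemma integral_max_step_shift:
  assumes "0 \<le> m"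
  shows "(\<integral>\<omega>. real_of_int (max 0 (X 0 \<omega> + m)) \<partial>M) = mean + real_of_int m + \<xi> * r ^ Suc (nat m) / (1 - r)"
proof -
  have "real_of_int (max 0 (X 0 \<omega> + m))
      = real_of_int (X 0 \<omega>) + real_of_int m + real_of_int (max 0 (- X 0 \<omega> - int (nat m)))" for \<omega>
    using assms by simp
  then show ?thesis
    using integrable_step neg_part_shifted[of "nat m"] by (simp add: mean_def prob_space)
qed

definition pos_gen :: "real \<Rightarrow> real" where
  "pos_gen s = (\<Sum>x. s ^ Suc x * prob {\<omega> \<in> space M. X 0 \<omega> = int (Suc x)})"

text \<open>By \<open>pos_gen_eq\<close>, this is the difference quotient of \<open>pos_gen\<close> at \<open>1\<close>.\<close>
definition pos_geom_mean :: "real \<Rightarrow> real" where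
  "pos_geom_mean s = (\<integral>\<omega>. pos_geom_sum s (X 0 \<omega>) \<partial>M)"

lemma integrable_pos_power: "0 \<le> s \<Longrightarrow> s \<le> 1 \<Longrightarrow> integrable M (\<lambda>\<omega>. pos_power s (X 0 \<omega>))"
  by (rule integrable_const_bound[where B=1]) (auto intro: borel_measurable_step simp: pos_power_def power_le_one)

lemma pos_gen_eq_integral:
  assumes s: "0 \<le> s" "s \<le> 1"
  shows "pos_gen s = (\<integral>\<omega>. pos_power s (X 0 \<omega>) \<partial>M)"
proof -
  define A where "A x = {\<omega> \<in> space M. X 0 \<omega> = int (Suc x)}" for x
  have A_sets: "A x \<in> sets M" for x by (simp add: A_def)
  have "(\<lambda>x. prob (A x)) sums prob (\<Union>x. A x)"
    by (rule measure_UNION) (auto simp: A_def disjoint_family_on_def emeasure_finite)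
  then have "summable (\<lambda>x. prob (A x))" by (simp add: sums_iff)
  moreover have "norm (s ^ Suc x * prob (A x)) \<le> prob (A x)" for x
  proof -
    have "s ^ Suc x \<le> 1" using s by (intro power_le_one) auto
    then show ?thesis using s by (simp add: abs_mult mult_left_le_one_le del: power_Suc)
  qed
  ultimately have summable: "summable (\<lambda>x. s ^ Suc x * prob (A x))"
    by (rule summable_comparison_test'[where N=0])
  have sums: "(\<lambda>x. s ^ Suc x * indicator (A x) \<omega>) sums pos_power s (X 0 \<omega>)" if "\<omega> \<in> space M" for \<omega>
  proof (cases "0 < X 0 \<omega>")
    case True
    define i where "i = nat (X 0 \<omega>) - 1"
    have "s ^ Suc x * indicator (A x) \<omega> = (if x = i then s ^ Suc i else 0)" for x
      using that True by (auto simp: A_def i_def simp del: power_Suc)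
    moreover have "s ^ Suc i = pos_power s (X 0 \<omega>)" using True by (simp add: pos_power_def i_def Suc_diff_1)
    ultimately show ?thesis using sums_single[of i "\<lambda>_. s ^ Suc i"] by simp
  qed (auto simp: A_def pos_power_def)
  show ?thesis
    using integral_suminf_indicator(2)[OF A_sets _ summable sums] s by (simp add: pos_gen_def A_def)
qed

lemma integrable_pos_part: "integrable M (\<lambda>\<omega>. real_of_int (max 0 (X 0 \<omega>)))"
  and integral_pos_part: "(\<integral>\<omega>. real_of_int (max 0 (X 0 \<omega>)) \<partial>M) = mean + \<xi> * r / (1 - r)"
proof -
  have eq: "real_of_int (max 0 (X 0 \<omega>)) = real_of_int (X 0 \<omega>) + real_of_int (max 0 (- X 0 \<omega> - int 0))" for \<omega>
    by simp
  show "integrable M (\<lambda>\<omega>. real_of_int (max 0 (X 0 \<omega>)))"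
    unfolding eq by (intro Bochner_Integration.integrable_add integrable_step neg_part_shifted(1))
  show "(\<integral>\<omega>. real_of_int (max 0 (X 0 \<omega>)) \<partial>M) = mean + \<xi> * r / (1 - r)"
    unfolding eq using neg_part_shifted[of 0] integrable_step by (simp add: mean_def)
qed

lemma integrable_pos_geom_sum: "0 \<le> s \<Longrightarrow> s \<le> 1 \<Longrightarrow> integrable M (\<lambda>\<omega>. pos_geom_sum s (X 0 \<omega>))"
  by (rule Bochner_Integration.integrable_bound[OF integrable_pos_part borel_measurable_step])
    (use pos_geom_sum_bounds in auto)

lemma pos_gen_eq: "0 \<le> s \<Longrightarrow> s \<le> 1 \<Longrightarrow> pos_gen s = (1 - \<xi>) - (1 - s) * pos_geom_mean s"
  using integral_indicator_step[of "\<lambda>x. 0 < x"] integrable_indicator_step[of "\<lambda>x. 0 < x"]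
    integrable_pos_geom_sum[of s]
  by (simp add: pos_gen_eq_integral pos_power_eq_pos_geom_sum pos_geom_mean_def prob_step_pos)

lemma tendsto_pos_geom_mean:
  assumes "\<And>k. 0 \<le> t k \<and> t k \<le> 1" "t \<longlonglongrightarrow> 1"
  shows "(\<lambda>k. pos_geom_mean (t k)) \<longlonglongrightarrow> mean + \<xi> * r / (1 - r)"
proof -
  have "(\<lambda>k. \<integral>\<omega>. pos_geom_sum (t k) (X 0 \<omega>) \<partial>M) \<longlonglongrightarrow> (\<integral>\<omega>. real_of_int (max 0 (X 0 \<omega>)) \<partial>M)"
  proof (rule integral_dominated_convergence[OF borel_measurable_step borel_measurable_step integrable_pos_part])
    have "(\<lambda>k. pos_geom_sum (t k) x) \<longlonglongrightarrow> real_of_int (max 0 x)" for x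
    proof (cases "0 < x")
      case True
      have "(\<lambda>k. \<Sum>j<nat x. t k ^ j) \<longlonglongrightarrow> (\<Sum>j<nat x. 1 ^ j)"
        by (intro tendsto_intros assms)
      then show ?thesis using True by (simp add: pos_geom_sum_def)
    qed (simp add: pos_geom_sum_def)
    then show "AE \<omega> in M. (\<lambda>k. pos_geom_sum (t k) (X 0 \<omega>)) \<longlonglongrightarrow> real_of_int (max 0 (X 0 \<omega>))"
      by simp
    show "AE \<omega> in M. norm (pos_geom_sum (t k) (X 0 \<omega>)) \<le> real_of_int (max 0 (X 0 \<omega>))" for k
      using pos_geom_sum_bounds assms by (intro AE_I2) auto
  qed
  then show ?thesis by (simp add: pos_geom_mean_def integral_pos_part)
qed

subsection \<open>The generating function of the maximum\<close>

definition max_gen :: "nat \<Rightarrow> real \<Rightarrow> real" where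
  "max_gen n s = (\<integral>\<omega>. s ^ nat (partial_max n (\<lambda>i. X i \<omega>)) \<partial>M)"

lemma integrable_power_partial_max:
  assumes "0 \<le> s" "s \<le> (1::real)"
  shows "integrable M (\<lambda>\<omega>. s ^ nat (partial_max n (\<lambda>i. X i \<omega>)))"
proof (rule integrable_const_bound[where B=1])
  show "AE \<omega> in M. norm (s ^ nat (partial_max n (\<lambda>i. X i \<omega>))) \<le> 1"
    using assms by (intro AE_I2) (simp add: power_le_one)
qed (rule borel_measurable_count_space_comp[OF measurable_partial_max])

lemma integrable_partial_max: "integrable M (\<lambda>\<omega>. real_of_int (partial_max n (\<lambda>i. X i \<omega>)))"
proof (rule Bochner_Integration.integrable_bound)
  have "integrable M (\<lambda>\<omega>. real_of_int \<bar>X i \<omega>\<bar>)" for i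
    using integrable_step integrable_step_iff[of "\<lambda>x. real_of_int \<bar>x\<bar>" i] by simp
  then show "integrable M (\<lambda>\<omega>. \<Sum>i<n. real_of_int \<bar>X i \<omega>\<bar>)"
    by (intro Bochner_Integration.integrable_sum)
  show "AE \<omega> in M. norm (real_of_int (partial_max n (\<lambda>i. X i \<omega>))) \<le> norm (\<Sum>i<n. real_of_int \<bar>X i \<omega>\<bar>)"
  proof (intro AE_I2)
    fix \<omega>
    have "0 \<le> partial_max n (\<lambda>i. X i \<omega>)" "partial_max n (\<lambda>i. X i \<omega>) \<le> (\<Sum>i<n. \<bar>X i \<omega>\<bar>)"
      by (rule partial_max_nonneg, rule partial_max_le_sum_abs)
    then show "norm (real_of_int (partial_max n (\<lambda>i. X i \<omega>))) \<le> norm (\<Sum>i<n. real_of_int \<bar>X i \<omega>\<bar>)"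
      by (simp add: sum_nonneg flip: of_int_sum of_int_abs)
  qed
qed (rule borel_measurable_count_space_comp[OF measurable_partial_max])

lemma integral_power_max_step_shift:
  assumes s: "0 \<le> s" "s \<le> 1"
  shows "(s - r) * (\<integral>\<omega>. s ^ nat (max 0 (X 0 \<omega> + int m)) \<partial>M)
       = (s - r) * pos_gen s * s ^ m + \<xi> * (1 - r) * s * (s ^ m - r ^ m) + \<xi> * (s - r) * r ^ m"
proof -
  let ?I = "\<lambda>\<omega>. \<Sum>k<m. s ^ (m - k) * (if X 0 \<omega> = - int k then 1 else 0)"
  have "integrable M ?I"
    using integrable_indicator_step by (intro Bochner_Integration.integrable_sum integrable_mult_right) auto
  moreover have "(\<integral>\<omega>. ?I \<omega> \<partial>M) = \<xi> * (1 - r) * (\<Sum>k<m. s ^ (m - k) * r ^ k)"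
    using integral_indicator_step[of "\<lambda>x. x = - int _"] integrable_indicator_step[of "\<lambda>x. x = - int _"]
    by (simp add: Bochner_Integration.integral_sum prob_step_eq_neg sum_distrib_left mult_ac)
  ultimately have E: "(\<integral>\<omega>. s ^ nat (max 0 (X 0 \<omega> + int m)) \<partial>M)
      = s ^ m * pos_gen s + \<xi> * (1 - r) * (\<Sum>k<m. s ^ (m - k) * r ^ k) + \<xi> * r ^ m"
    using integrable_pos_power[OF s] integral_indicator_step[of "\<lambda>x. x \<le> - int m"]
      integrable_indicator_step[of "\<lambda>x. x \<le> - int m"]
    by (simp add: power_max_shift_decomp pos_gen_eq_integral[OF s] prob_step_le_neg)
  have "(s - r) * (\<integral>\<omega>. s ^ nat (max 0 (X 0 \<omega> + int m)) \<partial>M)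
      = (s - r) * pos_gen s * s ^ m + \<xi> * (1 - r) * ((s - r) * (\<Sum>k<m. s ^ (m - k) * r ^ k)) + \<xi> * (s - r) * r ^ m"
    unfolding E by (simp add: algebra_simps)
  then show ?thesis by (simp only: diff_mult_sum_powers)
qed

lemma max_gen_Suc:
  assumes s: "0 \<le> s" "s \<le> 1"
  shows "(s - r) * max_gen (Suc n) s
       = (s - r) * pos_gen s * max_gen n s + \<xi> * (1 - r) * s * (max_gen n s - max_gen n r) + \<xi> * (s - r) * max_gen n r"
proof -
  have "(s - r) * max_gen (Suc n) s
      = (\<integral>\<omega>. (s - r) * (\<integral>\<omega>'. s ^ nat (max 0 (X 0 \<omega>' + int (nat (partial_max n (\<lambda>i. X i \<omega>))))) \<partial>M) \<partial>M)"
    unfolding max_gen_def integral_partial_max_Suc[OF integrable_power_partial_max[OF s]]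
    by (simp add: partial_max_nonneg)
  also have "\<dots> = (\<integral>\<omega>. (s - r) * pos_gen s * s ^ nat (partial_max n (\<lambda>i. X i \<omega>))
        + \<xi> * (1 - r) * s * (s ^ nat (partial_max n (\<lambda>i. X i \<omega>)) - r ^ nat (partial_max n (\<lambda>i. X i \<omega>)))
        + \<xi> * (s - r) * r ^ nat (partial_max n (\<lambda>i. X i \<omega>)) \<partial>M)"
    by (simp only: integral_power_max_step_shift[OF s])
  also have "\<dots> = (s - r) * pos_gen s * max_gen n s + \<xi> * (1 - r) * s * (max_gen n s - max_gen n r)
      + \<xi> * (s - r) * max_gen n r"
    using integrable_power_partial_max[OF s, of n] integrable_power_partial_max[of r n] r by (simp add: max_gen_def)
  finally show ?thesis .
qed

text \<open>By Lindley's recursion the expected maximum increases by \<open>mean + \<xi> r / (1 - r) * max_gen n r\<close>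
  from \<open>n\<close> to \<open>n + 1\<close>.\<close>
lemma max_gen_r_lower: "- mean \<le> \<xi> * r / (1 - r) * max_gen n r"
proof -
  have "(\<integral>\<omega>. real_of_int (partial_max (Suc n) (\<lambda>i. X i \<omega>)) \<partial>M)
      = (\<integral>\<omega>. mean + real_of_int (partial_max n (\<lambda>i. X i \<omega>))
          + \<xi> * r / (1 - r) * r ^ nat (partial_max n (\<lambda>i. X i \<omega>)) \<partial>M)"
    unfolding integral_partial_max_Suc[where f=real_of_int, OF integrable_partial_max]
    by (intro Bochner_Integration.integral_cong refl)
      (simp add: integral_max_step_shift partial_max_nonneg field_simps)
  also have "\<dots> = mean + (\<integral>\<omega>. real_of_int (partial_max n (\<lambda>i. X i \<omega>)) \<partial>M) + \<xi> * r / (1 - r) * max_gen n r"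
    using integrable_partial_max[of n] integrable_power_partial_max[of r n] r
    by (simp add: max_gen_def prob_space)
  finally have eq: "(\<integral>\<omega>. real_of_int (partial_max (Suc n) (\<lambda>i. X i \<omega>)) \<partial>M)
      = mean + (\<integral>\<omega>. real_of_int (partial_max n (\<lambda>i. X i \<omega>)) \<partial>M) + \<xi> * r / (1 - r) * max_gen n r" .
  have "(\<integral>\<omega>. real_of_int (partial_max n (\<lambda>i. X i \<omega>)) \<partial>M) \<le> (\<integral>\<omega>. real_of_int (partial_max (Suc n) (\<lambda>i. X i \<omega>)) \<partial>M)"
    by (intro integral_mono integrable_partial_max) (simp add: partial_max_le_Suc)
  then show ?thesis using eq by linarith
qed

definition sup_gen :: "real \<Rightarrow> real" where
  "sup_gen s = (\<integral>\<omega>. (if walk_bounded \<omega> then s ^ nat (walk_sup \<omega>) else 0) \<partial>M)"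

lemma tendsto_max_gen:
  assumes s: "0 \<le> s" "s < 1"
  shows "(\<lambda>n. max_gen n s) \<longlonglongrightarrow> sup_gen s"
  unfolding max_gen_def sup_gen_def
proof (rule integral_dominated_convergence[where w="\<lambda>_. 1"])
  show "AE \<omega> in M. norm (s ^ nat (partial_max n (\<lambda>i. X i \<omega>))) \<le> 1" for n
    using s by (intro AE_I2) (simp add: power_le_one)
qed (use s tendsto_power_partial_max borel_measurable_power_walk_sup
      borel_measurable_count_space_comp[OF measurable_partial_max] in auto)

definition denom :: "real \<Rightarrow> real" where
  "denom s = (s - r) * pos_geom_mean s - \<xi> * r"

text \<open>The limit of \<open>max_gen_Suc\<close> as \<open>n \<rightarrow> \<infinity>\<close>.\<close>
lemma sup_gen_mult_denom:
  assumes s: "0 \<le> s" "s < 1"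
  shows "sup_gen s * denom s = - \<xi> * r * sup_gen r"
proof -
  have "(\<lambda>n. (s - r) * max_gen (Suc n) s) \<longlonglongrightarrow> (s - r) * sup_gen s"
    by (intro tendsto_mult tendsto_const LIMSEQ_Suc tendsto_max_gen[OF s])
  moreover have "(\<lambda>n. (s - r) * max_gen (Suc n) s) \<longlonglongrightarrow>
      (s - r) * pos_gen s * sup_gen s + \<xi> * (1 - r) * s * (sup_gen s - sup_gen r) + \<xi> * (s - r) * sup_gen r"
    unfolding max_gen_Suc[OF s(1) less_imp_le[OF s(2)]]
    using r by (intro tendsto_intros tendsto_max_gen[OF s] tendsto_max_gen) auto
  ultimately have "(s - r) * sup_gen s
      = (s - r) * pos_gen s * sup_gen s + \<xi> * (1 - r) * s * (sup_gen s - sup_gen r) + \<xi> * (s - r) * sup_gen r"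
    by (rule LIMSEQ_unique)
  then have "(1 - s) * (sup_gen s * denom s + \<xi> * r * sup_gen r) = 0"
    unfolding pos_gen_eq[OF s(1) less_imp_le[OF s(2)]] denom_def by (simp add: algebra_simps)
  then show ?thesis using s by simp
qed

lemma sup_gen_r_lower: "- mean \<le> \<xi> * r / (1 - r) * sup_gen r"
proof -
  have "(\<lambda>n. \<xi> * r / (1 - r) * max_gen n r) \<longlonglongrightarrow> \<xi> * r / (1 - r) * sup_gen r"
    using r by (intro tendsto_intros tendsto_max_gen) auto
  then show ?thesis by (rule LIMSEQ_le_const) (use max_gen_r_lower in auto)
qed

lemma tendsto_sup_gen_one:
  assumes "\<And>k. 0 \<le> t k \<and> t k < 1" "t \<longlonglongrightarrow> 1"
  shows "(\<lambda>k. sup_gen (t k)) \<longlonglongrightarrow> prob {\<omega> \<in> space M. walk_bounded \<omega>}"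
proof -
  have "(\<lambda>k. sup_gen (t k)) \<longlonglongrightarrow> (\<integral>\<omega>. (if walk_bounded \<omega> then 1 else 0) \<partial>M)"
    unfolding sup_gen_def
  proof (rule integral_dominated_convergence[where w="\<lambda>_. 1"])
    have "(\<lambda>k. t k ^ nat (walk_sup \<omega>)) \<longlonglongrightarrow> 1 ^ nat (walk_sup \<omega>)" for \<omega>
      by (intro tendsto_intros assms)
    then show "AE \<omega> in M. (\<lambda>k. if walk_bounded \<omega> then t k ^ nat (walk_sup \<omega>) else 0)
        \<longlonglongrightarrow> (if walk_bounded \<omega> then 1 else 0)"
      by simp
    show "AE \<omega> in M. norm (if walk_bounded \<omega> then t k ^ nat (walk_sup \<omega>) else 0) \<le> 1" for k
      using assms by (intro AE_I2) (simp add: power_le_one less_imp_le)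
  qed (use assms borel_measurable_power_walk_sup in auto)
  then show ?thesis by (simp add: prob_eq_integral_if)
qed

text \<open>As \<open>s \<rightarrow> 1\<close> the functional equation gives \<open>P * (1 - r) * mean = - \<xi> * r * sup_gen r\<close>
  for the probability \<open>P\<close> that the walk is bounded; \<open>sup_gen_r_lower\<close> then forces \<open>P = 1\<close>.\<close>
lemma walk_bounded_prob: "prob {\<omega> \<in> space M. walk_bounded \<omega>} = 1"
  and sup_gen_r: "\<xi> * r * sup_gen r = - (1 - r) * mean"
proof -
  define t where "t k = 1 - inverse (real (Suc k))" for k
  have t: "0 \<le> t k \<and> t k < 1" for k by (simp add: t_def inverse_le_1_iff)
  have t1: "t \<longlonglongrightarrow> 1"
    using tendsto_diff[OF tendsto_const LIMSEQ_inverse_real_of_nat, of 1] by (simp add: t_def[abs_def])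
  have "(\<lambda>k. sup_gen (t k) * denom (t k))
      \<longlonglongrightarrow> prob {\<omega> \<in> space M. walk_bounded \<omega>} * ((1 - r) * (mean + \<xi> * r / (1 - r)) - \<xi> * r)"
    unfolding denom_def using t
    by (intro tendsto_intros tendsto_sup_gen_one t1 tendsto_pos_geom_mean) (auto simp: less_imp_le)
  moreover have "sup_gen (t k) * denom (t k) = - \<xi> * r * sup_gen r" for k
    using t by (intro sup_gen_mult_denom) auto
  moreover have "(1 - r) * (mean + \<xi> * r / (1 - r)) - \<xi> * r = (1 - r) * mean"
    using r by (simp add: field_simps)
  ultimately have E: "prob {\<omega> \<in> space M. walk_bounded \<omega>} * ((1 - r) * mean) = - \<xi> * r * sup_gen r"
    by (simp add: LIMSEQ_const_iff)
  have "- \<xi> * r * sup_gen r \<le> (1 - r) * mean"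
    using sup_gen_r_lower r by (simp add: field_simps)
  moreover have "(1 - r) * mean < 0" using r mean_neg by (simp add: mean_def mult_pos_neg)
  ultimately have "1 \<le> prob {\<omega> \<in> space M. walk_bounded \<omega>}"
    using E by (metis mult_le_cancel_right2 not_less)
  then show P: "prob {\<omega> \<in> space M. walk_bounded \<omega>} = 1" by (intro antisym) auto
  show "\<xi> * r * sup_gen r = - (1 - r) * mean" using E by (simp add: P algebra_simps)
qed

text \<open>Off the bounded paths, the supremum of the unbounded range is the junk value
  \<open>Sup UNIV\<close>; this null set does not affect the integral.\<close>
lemma integral_power_walk_sup:
  assumes s: "0 \<le> s" "s < 1"
  shows "(\<integral>\<omega>. s ^ nat (walk_sup \<omega>) \<partial>M) = sup_gen s"
proof -
  have "walk_sup \<omega> = Sup (UNIV :: int set)" if "\<not> walk_bounded \<omega>" for \<omega>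
    using that unfolding walk_sup_def walk_bounded_def
    by (intro Sup_int_not_bdd_above) (auto simp: bdd_above_def)
  moreover define G where "G \<omega> = (if walk_bounded \<omega> then s ^ nat (walk_sup \<omega>) else 0)" for \<omega>
  ultimately have eq: "(\<lambda>\<omega>. s ^ nat (walk_sup \<omega>))
      = (\<lambda>\<omega>. if walk_bounded \<omega> then G \<omega> else s ^ nat (Sup (UNIV :: int set)))"
    by (auto simp: G_def)
  have "AE \<omega> in M. \<omega> \<in> {\<omega> \<in> space M. walk_bounded \<omega>}"
    by (subst AE_in_set_eq_1) (auto simp: walk_bounded_prob)
  then have "AE \<omega> in M. walk_bounded \<omega>" by auto
  note ae = this
  have G: "G \<in> borel_measurable M"
    unfolding G_def by (rule borel_measurable_power_walk_sup[OF s])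
  show ?thesis unfolding sup_gen_def eq G_def[symmetric]
  proof (rule integral_cong_AE)
    show "AE \<omega> in M. (if walk_bounded \<omega> then G \<omega> else s ^ nat (Sup (UNIV :: int set))) = G \<omega>"
      using ae by eventually_elim simp
  qed (use G in auto)
qed

lemma sup_gen_eq:
  assumes s: "0 \<le> s" "s < 1"
  shows "denom s \<noteq> 0" and "sup_gen s = (1 - r) * mean / denom s"
proof -
  have eq: "sup_gen s * denom s = (1 - r) * mean"
    using sup_gen_mult_denom[OF s] sup_gen_r by (simp add: algebra_simps)
  moreover have "(1 - r) * mean \<noteq> 0" using r mean_neg by (simp add: mean_def)
  ultimately show "denom s \<noteq> 0" by auto
  then show "sup_gen s = (1 - r) * mean / denom s" using eq by (simp add: eq_divide_eq)
qed

lemma denom_eq: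
  assumes s: "0 \<le> s" "s < 1"
  shows "- denom s = r - ((1 - (1 - r) / (1 - s)) * pos_gen s + s * ((1 - r) / (1 - s)) * (1 - \<xi>))"
proof -
  have "(1 - (1 - r) / (1 - s)) * pos_gen s + s * ((1 - r) / (1 - s)) * (1 - \<xi>)
      = ((r - s) * pos_gen s + s * (1 - r) * (1 - \<xi>)) / (1 - s)"
  proof -
    have "1 - (1 - r) / (1 - s) = (r - s) / (1 - s)" using s by (simp add: field_simps)
    then show ?thesis by (simp add: add_divide_distrib)
  qed
  also have "(r - s) * pos_gen s + s * (1 - r) * (1 - \<xi>) = (1 - s) * ((1 - \<xi>) * r - (r - s) * pos_geom_mean s)"
    unfolding pos_gen_eq[OF s(1) less_imp_le[OF s(2)]] by (simp add: algebra_simps)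
  also have "(1 - s) * ((1 - \<xi>) * r - (r - s) * pos_geom_mean s) / (1 - s) = (1 - \<xi>) * r - (r - s) * pos_geom_mean s"
    using s by simp
  finally show ?thesis by (simp add: denom_def algebra_simps)
qed

subsection \<open>Ladder epochs\<close>

text \<open>By the memoryless left tail, a first entrance into \<open>(-\<infinity>, 0]\<close> lands exactly at \<open>0\<close>
  with conditional probability \<open>1 - r\<close>, whatever the height it starts from.\<close>
lemma prob_first_nonpos_zero:
  "prob {\<omega> \<in> space M. (\<forall>k\<in>{1..<Suc n}. 0 < partial_sum k (\<lambda>i. X i \<omega>)) \<and> partial_sum (Suc n) (\<lambda>i. X i \<omega>) = 0}
   = (1 - r) * prob (first_nonpos n)"
proof -
  define pos where "pos v \<longleftrightarrow> (\<forall>k\<in>{1..<Suc n}. 0 < partial_sum k v)" for v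
  have hist: "pos (\<lambda>i\<in>{..<n}. X i \<omega>) = pos (\<lambda>i. X i \<omega>)"
    "partial_sum n (\<lambda>i\<in>{..<n}. X i \<omega>) = partial_sum n (\<lambda>i. X i \<omega>)" for \<omega>
    unfolding pos_def using partial_sum_cong[of _ n "\<lambda>i\<in>{..<n}. X i \<omega>" "\<lambda>i. X i \<omega>"] by auto
  have Suc: "partial_sum (Suc n) v = partial_sum n v + v n" for v
    by (simp add: partial_sum_def)
  have pos_nonneg: "0 \<le> partial_sum n v" if "pos v" for v
  proof (cases n)
    case (Suc m)
    then have "n \<in> {1..<Suc n}" by simp
    with that show ?thesis unfolding pos_def by fastforce
  qed (simp add: partial_sum_def)
  have inner: "prob {\<omega>' \<in> space M. pos v \<and> partial_sum n v + X 0 \<omega>' = 0}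
      = (1 - r) * prob {\<omega>' \<in> space M. pos v \<and> partial_sum n v + X 0 \<omega>' \<le> 0}" for v
  proof (cases "pos v")
    case True
    have "{\<omega>' \<in> space M. pos v \<and> partial_sum n v + X 0 \<omega>' = 0} = {\<omega>' \<in> space M. X 0 \<omega>' = - partial_sum n v}"
      "{\<omega>' \<in> space M. pos v \<and> partial_sum n v + X 0 \<omega>' \<le> 0} = {\<omega>' \<in> space M. X 0 \<omega>' \<le> - partial_sum n v}"
      using True by auto
    then show ?thesis using prob_step_eq_neg_memoryless[OF pos_nonneg[OF True]] by simp
  qed simp
  have "prob {\<omega> \<in> space M. pos (\<lambda>i. X i \<omega>) \<and> partial_sum (Suc n) (\<lambda>i. X i \<omega>) = 0}
      = (\<integral>\<omega>. prob {\<omega>' \<in> space M. pos (\<lambda>i\<in>{..<n}. X i \<omega>) \<and> partial_sum n (\<lambda>i\<in>{..<n}. X i \<omega>) + X 0 \<omega>' = 0} \<partial>M)"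
    using prob_last_step[of "\<lambda>v x. pos v \<and> partial_sum n v + x = 0" n] by (simp add: hist Suc)
  also have "\<dots> = (1 - r) * (\<integral>\<omega>. prob {\<omega>' \<in> space M. pos (\<lambda>i\<in>{..<n}. X i \<omega>) \<and> partial_sum n (\<lambda>i\<in>{..<n}. X i \<omega>) + X 0 \<omega>' \<le> 0} \<partial>M)"
    by (simp add: inner)
  also have "\<dots> = (1 - r) * prob {\<omega> \<in> space M. pos (\<lambda>i. X i \<omega>) \<and> partial_sum (Suc n) (\<lambda>i. X i \<omega>) \<le> 0}"
    using prob_last_step[of "\<lambda>v x. pos v \<and> partial_sum n v + x \<le> 0" n] by (simp add: hist Suc)
  finally show ?thesis by (simp add: pos_def first_nonpos_def)
qed

lemma sum_prob_first_return_zero: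
  "(\<Sum>n. prob {\<omega> \<in> space M. (\<forall>k\<in>{1..<Suc n}. rw_S X k \<omega> < 0) \<and> rw_S X (Suc n) \<omega> = 0}) = 1 - r"
proof -
  have "(\<lambda>n. (1 - r) * prob (first_nonpos n)) sums ((1 - r) * 1)"
    by (intro sums_mult sums_prob_first_nonpos prob_stays_positive_eq_0 walk_bounded_prob)
  moreover have "(\<lambda>n. prob {\<omega> \<in> space M. (\<forall>k\<in>{1..<Suc n}. rw_S X k \<omega> < 0) \<and> rw_S X (Suc n) \<omega> = 0})
      = (\<lambda>n. (1 - r) * prob (first_nonpos n))"
    by (simp only: prob_first_return_reversed prob_first_nonpos_zero)
  ultimately show ?thesis by (simp add: sums_iff)
qed

end

theorem mainTheorem4:
  fixes M :: "'a measure" and X :: "nat \<Rightarrow> 'a \<Rightarrow> int"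
    and \<xi> r s :: real
  assumes "prob_space M"
    and "prob_space.indep_vars M (\<lambda>_. count_space UNIV) X UNIV"
    and "\<And>i. distr M (count_space UNIV) (X i) = distr M (count_space UNIV) (X 0)"
    and "measure M {\<omega> \<in> space M. X 0 \<omega> > 0} > 0"
    and "measure M {\<omega> \<in> space M. X 0 \<omega> < 0} > 0"
    and "integrable M (\<lambda>\<omega>. real_of_int (X 0 \<omega>))"
    and "(\<integral>\<omega>. real_of_int (X 0 \<omega>) \<partial>M) < 0"
    and "0 < \<xi>" "\<xi> < 1" "0 < r" "r < 1"
    and "\<And>x::int. x \<le> 0 \<Longrightarrow> measure M {\<omega> \<in> space M. X 0 \<omega> \<le> x} = \<xi> * r ^ nat (- x)"
    and "0 \<le> s" "s < 1"
  shows
   "(let \<zeta> = (\<Sum>n. measure M {\<omega> \<in> space M.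
                     (\<forall>k\<in>{1..<Suc n}. rw_S X k \<omega> < 0) \<and> rw_S X (Suc n) \<omega> = 0});
         mean = (\<integral>\<omega>. real_of_int (X 0 \<omega>) \<partial>M);
         F0 = measure M {\<omega> \<in> space M. X 0 \<omega> \<le> 0};
         Fplus = (\<Sum>x. s ^ Suc x * measure M {\<omega> \<in> space M. X 0 \<omega> = int (Suc x)});
         Ms = (\<integral>\<omega>. s ^ nat (Sup (range (\<lambda>n. rw_S X n \<omega>))) \<partial>M)
     in Ms = (1 - \<zeta> - r - (1 - r) * mean) /
             (1 - \<zeta> - ((1 - (1 - r) / (1 - s)) * Fplus + s * ((1 - r) / (1 - s)) * (1 - F0))))"
proof -
  have "geometric_left_tail_walk M X \<xi> r"
    unfolding geometric_left_tail_walk_def geometric_left_tail_walk_axioms_def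
      iid_int_walk_def iid_int_walk_axioms_def
    using assms by auto
  then interpret geometric_left_tail_walk M X \<xi> r .
  have s: "0 \<le> s" "s < 1" using assms by auto
  have F0: "measure M {\<omega> \<in> space M. X 0 \<omega> \<le> 0} = \<xi>"
    using left_tail[of 0] by simp
  have Ms: "(\<integral>\<omega>. s ^ nat (Sup (range (\<lambda>n. rw_S X n \<omega>))) \<partial>M) = sup_gen s"
    using integral_power_walk_sup[OF s] by (simp add: walk_sup_def rw_S_eq_partial_sum)
  have den: "1 - (1 - r) - ((1 - (1 - r) / (1 - s)) * pos_gen s + s * ((1 - r) / (1 - s)) * (1 - \<xi>))
      = - denom s"
    using denom_eq[OF s] by simp
  have num: "1 - (1 - r) - r - (1 - r) * mean = - ((1 - r) * mean)" by simp
  show ?thesis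
    unfolding Let_def sum_prob_first_return_zero F0 Ms pos_gen_def[symmetric] mean_def[symmetric] den num
    using sup_gen_eq(2)[OF s] by simp
qed

end
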